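(* Let $V$ be a real Hilbert space, $\mathcal D$ a dictionary, $V_n\subset V$ a subspace of dimension $n$ with orthonormal basis $(\phi_1,\dots,\phi_n)$, and $\kappa\in(0,1)$. Let $(W_m)_{m\ge0}$ be generated by the worst case OMP algorithm with parameter $\kappa$. If $J(V_n)<\infty$, then $$r_m\le\frac{n^2J(V_n)^2}{\kappa^2}(m+1)^{-1}\qquad\text{for all }m\ge0.$$
   Context: A dictionary is a set $\mathcal D\subset V$ of elements with $\|\omega\|=1$ for all $\omega\in\mathcal D$ whose finite linear combinations are dense in $V$. Worst case OMP: $W_0=\{0\}$; for $k\ge1$, take $v_k\in\operatorname{argmax}\{\|v-P_{W_{k-1}}v\|: v\in V_n,\ \|v\|=1\}$, then choose $\omega_k\in\mathcal D$ with $|\langle v_k-P_{W_{k-1}}v_k,\omega_k\rangle|\ge\kappa\sup_{\omega\in\mathcal D}|\langle v_k-P_{W_{k-1}}v_k,\omega\rangle|$, and set $W_k=\operatorname{span}\{\omega_1,\dots,\omega_k\}$ ($P_X$ is the orthogonal projection onto $X$). The residual is $r_m=\sum_{i=1}^n\|\phi_i-P_{W_m}\phi_i\|^2$. For $\Psi\in V^n$, $\|\Psi\|_{\ell^1(\mathcal D)}=\inf\{\sum_{\omega\in\mathcal D}\|c_\omega\|_2:\psi_i=\sum_{\omega\in\mathcal D}c_{\omega,i}\,\omega,\ i=1,\dots,n\}$ with $c_\omega\in\mathbb R^n$ (countably many nonzero; infimum of the empty set is $+\infty$), and $J(V_n)=\|(\phi_1,\dots,\phi_n)\|_{\ell^1(\mathcal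 D)}$ for an orthonormal basis of $V_n$ (independent of the choice of basis). *)

theory Defs
  imports "HOL-Analysis.Analysis"
begin

text \<open>Orthogonal projection onto a subspace W (well defined for the finite-dimensional
  subspaces W_k used below): the unique p in W with v - p orthogonal to W.\<close>
definition proj :: "'a::real_inner set \<Rightarrow> 'a \<Rightarrow> 'a" where
  "proj W v = (THE p. p \<in> W \<and> (\<forall>w\<in>W. inner (v - p) w = 0))"

definition dictionary :: "'a::real_normed_vector set \<Rightarrow> bool" where
  "dictionary D \<longleftrightarrow> (\<forall>w\<in>D. norm w = 1) \<and> closure (span D) = UNIV"

text \<open>The l1(D) norm of the tuple (psi_1,...,psi_n) (indices 1..n); coefficient vectors
  c_w in R^n are the functions i |-> c w i for i in {1..n}. Value in ennreal; the infimum
  of the empty set is top (= +infinity).\<close>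
definition l1_dict_norm :: "'a::real_normed_vector set \<Rightarrow> nat \<Rightarrow> (nat \<Rightarrow> 'a) \<Rightarrow> ennreal" where
  "l1_dict_norm D n \<psi> = Inf {(\<Sum>\<^sub>\<infinity>w\<in>D. ennreal (sqrt (\<Sum>i=1..n. (c w i)\<^sup>2))) | c.
       countable {w\<in>D. \<exists>i\<in>{1..n}. c w i \<noteq> 0} \<and>
       (\<forall>i\<in>{1..n}. ((\<lambda>w. c w i *\<^sub>R w) has_sum \<psi> i) D)}"

end

theory Submission
  imports Defs
begin

text \<open>
  Let R_j be the residual after j steps, r = v_(j+1) - P_(W_j) v_(j+1) and g = omega_(j+1) - P_(W_j) omega_(j+1),
  so that W_(j+1) = W_j + span g with g orthogonal to W_j and norm g \<le> 1. Adding g lowers R_j by at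
  least sum_i <phi_i, g>^2 \<ge> <v_(j+1), g>^2 = <r, omega_(j+1)>^2. On the other hand the maximality of
  v_(j+1) gives R_j \<le> n |r|^2, and for any representation phi_i = sum_w c_(w,i) w with
  S = sum_w |c_w| we get |r|^2 = <r, v_(j+1)> \<le> S sup_w |<r, w>| \<le> S |<r, omega_(j+1)>| / kappa.
  Together kappa^2 R_j^2 \<le> n^2 S^2 (R_j - R_(j+1)), and such a recursion forces
  R_m \<le> n^2 S^2 / (kappa^2 (m + 1)); taking the infimum over S yields J(V_n).
\<close>

lemma proj_span_exists:
  fixes B :: "'a::real_inner set"
  assumes "finite B"
  shows "\<exists>p\<in>span B. \<forall>w\<in>span B. inner (v - p) w = 0"
  using assms
proof (induction B arbitrary: v rule: finite_induct)
  case empty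
  then show ?case by auto
next
  case (insert a B)
  obtain p where p: "p \<in> span B" "\<forall>w\<in>span B. inner (v - p) w = 0"
    using insert.IH by blast
  obtain q where q: "q \<in> span B" "\<forall>w\<in>span B. inner (a - q) w = 0"
    using insert.IH by blast
  define g where "g = a - q"
  have g_orth: "inner g w = 0" if "w \<in> span B" for w
    using q(2) that by (simp add: g_def)
  show ?case
  proof (cases "g = 0")
    case True
    then have "span (insert a B) = span B"
      using q(1) by (simp add: g_def span_redundant)
    then show ?thesis using p by auto
  next
    case False
    define p' where "p' = p + (inner v g / inner g g) *\<^sub>R g"
    have "g \<in> span (insert a B)"
      unfolding g_def using q(1) by (meson span_base span_diff span_mono insertI1 subset_insertI subsetD)
    moreover have "p \<in> span (insert a B)" using p(1) span_mono[of B "insert a B"] by auto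
    ultimately have p'_mem: "p' \<in> span (insert a B)"
      unfolding p'_def by (simp add: span_add span_scale)
    have perp_g: "inner (v - p') g = 0"
      using False g_orth[OF p(1)] by (simp add: p'_def inner_diff_right inner_add_right inner_commute)
    have perp_B: "inner (v - p') b = 0" if "b \<in> span B" for b
      using p(2) g_orth that by (simp add: p'_def inner_diff_left inner_add_left)
    have "inner (v - p') w = 0" if w: "w \<in> span (insert a B)" for w
    proof -
      obtain t where t: "w - t *\<^sub>R a \<in> span B" using w by (auto simp: span_insert)
      have "w = (w - t *\<^sub>R a + t *\<^sub>R q) + t *\<^sub>R g" by (simp add: g_def algebra_simps)
      moreover have "w - t *\<^sub>R a + t *\<^sub>R q \<in> span B" using t q(1) by (simp add: span_add span_scale)
      ultimately show ?thesis using perp_B perp_g by (metis inner_add_right inner_scaleR_right mult_zero_right add_0)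
    qed
    then show ?thesis using p'_mem by blast
  qed
qed

lemma proj_span:
  fixes B :: "'a::real_inner set"
  assumes "finite B"
  shows "proj (span B) v \<in> span B" and "\<And>w. w \<in> span B \<Longrightarrow> inner (v - proj (span B) v) w = 0"
proof -
  obtain p where p: "p \<in> span B" "\<forall>w\<in>span B. inner (v - p) w = 0"
    using proj_span_exists[OF assms] by blast
  have "q = p" if "q \<in> span B" "\<forall>w\<in>span B. inner (v - q) w = 0" for q
  proof -
    have "p - q \<in> span B" using p(1) that(1) by (simp add: span_diff)
    then have "inner (p - q) (p - q) = inner (v - q) (p - q) - inner (v - p) (p - q)"
      by (simp add: inner_diff_left)
    also have "\<dots> = 0" using \<open>p - q \<in> span B\<close> p(2) that(2) by simp
    finally show ?thesis by simp
  qed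
  with p have "\<exists>!p. p \<in> span B \<and> (\<forall>w\<in>span B. inner (v - p) w = 0)" by blast
  then have "proj (span B) v \<in> span B \<and> (\<forall>w\<in>span B. inner (v - proj (span B) v) w = 0)"
    unfolding proj_def by (rule theI')
  then show "proj (span B) v \<in> span B" and "\<And>w. w \<in> span B \<Longrightarrow> inner (v - proj (span B) v) w = 0"
    by auto
qed

lemma proj_span_minimal:
  fixes B :: "'a::real_inner set"
  assumes "finite B" "w \<in> span B"
  shows "(norm (v - proj (span B) v))\<^sup>2 \<le> (norm (v - w))\<^sup>2"
proof -
  let ?p = "proj (span B) v"
  have "?p - w \<in> span B" using proj_span(1)[OF assms(1)] assms(2) by (simp add: span_diff)
  then have "orthogonal (v - ?p) (?p - w)"
    unfolding orthogonal_def by (rule proj_span(2)[OF assms(1)])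
  then have "(norm (v - w))\<^sup>2 = (norm (v - ?p))\<^sup>2 + (norm (?p - w))\<^sup>2"
    using norm_add_Pythagorean by fastforce
  then show ?thesis by simp
qed

lemma proj_span_residual_decrease:
  fixes B B' :: "'a::real_inner set"
  assumes fin: "finite B" "finite B'" and sub: "span B \<subseteq> span B'"
    and g: "g \<in> span B'" "\<And>w. w \<in> span B \<Longrightarrow> inner g w = 0" "norm g \<le> 1"
  shows "(norm (x - proj (span B') x))\<^sup>2 \<le> (norm (x - proj (span B) x))\<^sup>2 - (inner x g)\<^sup>2"
proof -
  let ?P = "proj (span B)"
  define t where "t = inner x g"
  have t: "t = inner (x - ?P x) g"
    using g(2)[OF proj_span(1)[OF fin(1)]] by (simp add: t_def inner_diff_left inner_diff_right inner_commute)
  have "?P x + t *\<^sub>R g \<in> span B'"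
    using proj_span(1)[OF fin(1), of x] sub g(1) by (meson span_add span_scale subsetD)
  from proj_span_minimal[OF fin(2) this]
  have "(norm (x - proj (span B') x))\<^sup>2 \<le> (norm ((x - ?P x) - t *\<^sub>R g))\<^sup>2"
    by (simp add: algebra_simps)
  also have "\<dots> = (norm (x - ?P x))\<^sup>2 - 2 * t\<^sup>2 + t\<^sup>2 * (norm g)\<^sup>2"
  proof -
    have "(norm (a - t *\<^sub>R g))\<^sup>2 = (norm a)\<^sup>2 - 2 * t * inner a g + t\<^sup>2 * (norm g)\<^sup>2" for a
      unfolding power2_norm_eq_inner
      by (simp add: inner_diff_left inner_diff_right inner_commute algebra_simps power2_eq_square)
    then show ?thesis using t by (simp add: power2_eq_square)
  qed
  also have "\<dots> \<le> (norm (x - ?P x))\<^sup>2 - t\<^sup>2"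
    using mult_left_le[of "(norm g)\<^sup>2" "t\<^sup>2"] g(3) by (simp add: power_le_one)
  finally show ?thesis by (simp add: t_def)
qed

lemma orthonormal_span_expansion:
  fixes \<phi> :: "'i \<Rightarrow> 'a::real_inner"
  assumes orth: "\<forall>i\<in>I. \<forall>j\<in>I. inner (\<phi> i) (\<phi> j) = (if i = j then 1 else 0)"
    and fin: "finite I" and v: "v \<in> span (\<phi> ` I)"
  shows "v = (\<Sum>i\<in>I. inner v (\<phi> i) *\<^sub>R \<phi> i)"
  using v
proof (induction rule: span_induct_alt)
  case base then show ?case by simp
next
  case (step c x y)
  then obtain j where j: "j \<in> I" "x = \<phi> j" by auto
  have "(\<Sum>i\<in>I. inner (\<phi> j) (\<phi> i) *\<^sub>R \<phi> i) = (\<Sum>i\<in>I. if j = i then \<phi> i else 0)"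
    using orth j(1) by (intro sum.cong) auto
  also have "\<dots> = \<phi> j" using j(1) fin by simp
  finally have "(\<Sum>i\<in>I. inner x (\<phi> i) *\<^sub>R \<phi> i) = x" using j(2) by simp
  with step.IH have "c *\<^sub>R x + y
      = c *\<^sub>R (\<Sum>i\<in>I. inner x (\<phi> i) *\<^sub>R \<phi> i) + (\<Sum>i\<in>I. inner y (\<phi> i) *\<^sub>R \<phi> i)"
    by simp
  also have "\<dots> = (\<Sum>i\<in>I. inner (c *\<^sub>R x + y) (\<phi> i) *\<^sub>R \<phi> i)"
    by (simp add: inner_add_left scaleR_add_left sum.distrib scaleR_sum_right)
  finally show ?case .
qed

lemma orthonormal_span_inner:
  fixes \<phi> :: "'i \<Rightarrow> 'a::real_inner"
  assumes "\<forall>i\<in>I. \<forall>j\<in>I. inner (\<phi> i) (\<phi> j) = (if i = j then 1 else 0)"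
    and "finite I" and "v \<in> span (\<phi> ` I)"
  shows "inner v x = (\<Sum>i\<in>I. inner v (\<phi> i) * inner (\<phi> i) x)"
  by (subst orthonormal_span_expansion[OF assms]) (simp add: inner_sum_left)

lemma orthonormal_span_norm:
  fixes \<phi> :: "'i \<Rightarrow> 'a::real_inner"
  assumes "\<forall>i\<in>I. \<forall>j\<in>I. inner (\<phi> i) (\<phi> j) = (if i = j then 1 else 0)"
    and "finite I" and "v \<in> span (\<phi> ` I)"
  shows "norm v = L2_set (\<lambda>i. inner v (\<phi> i)) I"
  using orthonormal_span_inner[OF assms, of v]
  by (simp add: norm_eq_sqrt_inner L2_set_def power2_eq_square inner_commute)

lemma abs_sum_mult_le_L2_set:
  fixes a b :: "'i \<Rightarrow> real"
  shows "\<bar>\<Sum>i\<in>I. a i * b i\<bar> \<le> L2_set a I * L2_set b I"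
proof -
  have "\<bar>\<Sum>i\<in>I. a i * b i\<bar> \<le> (\<Sum>i\<in>I. \<bar>a i\<bar> * \<bar>b i\<bar>)"
    using sum_abs[of "\<lambda>i. a i * b i" I] by (simp add: abs_mult)
  also have "\<dots> \<le> L2_set a I * L2_set b I" by (rule L2_set_mult_ineq)
  finally show ?thesis .
qed

lemma orthonormal_span_inner_le:
  fixes \<phi> :: "'i \<Rightarrow> 'a::real_inner"
  assumes "\<forall>i\<in>I. \<forall>j\<in>I. inner (\<phi> i) (\<phi> j) = (if i = j then 1 else 0)"
    and "finite I" and "v \<in> span (\<phi> ` I)" and "norm v = 1"
  shows "\<bar>inner v x\<bar> \<le> L2_set (\<lambda>i. inner (\<phi> i) x) I"
  using orthonormal_span_inner[OF assms(1-3), of x] orthonormal_span_norm[OF assms(1-3)] assms(4)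
    abs_sum_mult_le_L2_set[of "\<lambda>i. inner v (\<phi> i)" "\<lambda>i. inner (\<phi> i) x" I]
  by simp

lemma has_sum_sum:
  fixes f :: "'i \<Rightarrow> 'b \<Rightarrow> 'c::topological_comm_monoid_add"
  assumes "finite I" "\<And>i. i \<in> I \<Longrightarrow> (f i has_sum s i) A"
  shows "((\<lambda>x. \<Sum>i\<in>I. f i x) has_sum (\<Sum>i\<in>I. s i)) A"
  using assms by (induction I rule: finite_induct) (auto intro: has_sum_add has_sum_0)

lemma has_sum_enn2real_infsum:
  fixes f :: "'b \<Rightarrow> real"
  assumes nn: "\<And>x. x \<in> A \<Longrightarrow> 0 \<le> f x"
    and fin: "(\<Sum>\<^sub>\<infinity>x\<in>A. ennreal (f x)) < \<infinity>"
  shows "(f has_sum enn2real (\<Sum>\<^sub>\<infinity>x\<in>A. ennreal (f x))) A"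
proof -
  define T where "T = (\<Sum>\<^sub>\<infinity>x\<in>A. ennreal (f x))"
  have sum_ennreal_eq: "sum (\<lambda>x. ennreal (f x)) F = ennreal (sum f F)" if "F \<subseteq> A" for F
    using that nn by (intro sum_ennreal) auto
  have T_SUP: "T = (SUP F\<in>{F. finite F \<and> F \<subseteq> A}. sum (\<lambda>x. ennreal (f x)) F)"
    unfolding T_def by (rule nonneg_infsum_complete) simp
  have "sum f F \<le> enn2real T" if "finite F" "F \<subseteq> A" for F
  proof -
    have "ennreal (sum f F) \<le> T"
      unfolding T_SUP sum_ennreal_eq[OF that(2), symmetric] by (rule SUP_upper) (use that in auto)
    moreover have "0 \<le> sum f F" using nn that by (auto intro: sum_nonneg)
    ultimately show ?thesis
      using fin enn2real_mono[of "ennreal (sum f F)" T] by (simp add: T_def)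
  qed
  then have summable: "f summable_on A"
    by (intro nonneg_bdd_above_summable_on) (use nn in \<open>auto simp: bdd_above_def\<close>)
  have "ennreal (infsum f A) = (SUP F\<in>{F. finite F \<and> F \<subseteq> A}. ennreal (sum f F))"
    by (rule infsum_nonneg_is_SUPREMUM_ennreal[OF summable nn])
  also have "\<dots> = T" unfolding T_SUP by (intro SUP_cong) (auto simp: sum_ennreal_eq)
  finally have "infsum f A = enn2real T"
    using infsum_nonneg[of A f] nn by (metis enn2real_ennreal)
  then show ?thesis using has_sum_infsum[OF summable] by (simp add: T_def)
qed

lemma sum_inner_le_dictionary_bound:
  fixes \<psi> :: "'i \<Rightarrow> 'a::real_inner" and c :: "'a \<Rightarrow> 'i \<Rightarrow> real"
  assumes fin: "finite I"
    and repr: "\<And>i. i \<in> I \<Longrightarrow> ((\<lambda>w. c w i *\<^sub>R w) has_sum \<psi> i) D"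
    and coeff: "((\<lambda>w. L2_set (c w) I) has_sum S) D"
    and bound: "\<And>w. w \<in> D \<Longrightarrow> \<bar>inner r w\<bar> \<le> s"
  shows "(\<Sum>i\<in>I. a i * inner r (\<psi> i)) \<le> s * L2_set a I * S"
proof -
  have "((\<lambda>w. c w i * inner r w) has_sum inner r (\<psi> i)) D" if "i \<in> I" for i
    using has_sum_bounded_linear[OF bounded_linear_inner_right[of r] repr[OF that]] by simp
  then have lhs: "((\<lambda>w. \<Sum>i\<in>I. a i * (c w i * inner r w)) has_sum (\<Sum>i\<in>I. a i * inner r (\<psi> i))) D"
    by (intro has_sum_sum fin has_sum_cmult_right)
  have rhs: "((\<lambda>w. s * L2_set a I * L2_set (c w) I) has_sum s * L2_set a I * S) D"
    using coeff by (rule has_sum_cmult_right)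
  have "(\<Sum>i\<in>I. a i * (c w i * inner r w)) \<le> s * L2_set a I * L2_set (c w) I" if "w \<in> D" for w
  proof -
    have "(\<Sum>i\<in>I. a i * (c w i * inner r w)) = inner r w * (\<Sum>i\<in>I. a i * c w i)"
      by (simp add: sum_distrib_left algebra_simps)
    also have "\<dots> \<le> \<bar>inner r w\<bar> * \<bar>\<Sum>i\<in>I. a i * c w i\<bar>"
      by (simp add: abs_mult[symmetric])
    also have "\<dots> \<le> s * (L2_set a I * L2_set (c w) I)"
      using bound[OF that] abs_sum_mult_le_L2_set by (intro mult_mono) auto
    finally show ?thesis by (simp add: mult.assoc)
  qed
  then show ?thesis using has_sum_mono[OF lhs rhs] by simp
qed

lemma quadratic_recursion_step:
  fixes x B N :: real
  assumes x: "0 \<le> x" "x * N \<le> B" and N: "1 \<le> N" and B: "0 < B"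
  shows "(x * B - x\<^sup>2) * (N + 1) \<le> B\<^sup>2"
proof (cases "2 \<le> N")
  case True
  have "B \<le> B * (N - 1)" using True B by simp
  then have "0 \<le> (B - x * N) * (B * (N - 1) - x * N)"
    using x by (intro mult_nonneg_nonneg) auto
  then have "N\<^sup>2 * (x * B - x\<^sup>2) \<le> B\<^sup>2 * (N - 1)"
    by (simp add: algebra_simps power2_eq_square)
  then have "N\<^sup>2 * ((x * B - x\<^sup>2) * (N + 1)) \<le> B\<^sup>2 * (N - 1) * (N + 1)"
    using N by (simp add: mult.assoc[symmetric] mult_right_mono)
  also have "\<dots> \<le> N\<^sup>2 * B\<^sup>2" by (simp add: algebra_simps power2_eq_square)
  finally show ?thesis using N by simp
next
  case False
  have "x * B - x\<^sup>2 \<le> B\<^sup>2 / 4"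
    using zero_le_power2[of "x - B / 2"] by (simp add: power2_eq_square algebra_simps)
  then have "(x * B - x\<^sup>2) * (N + 1) \<le> B\<^sup>2 / 4 * (N + 1)"
    using N by (intro mult_right_mono) auto
  also have "\<dots> \<le> B\<^sup>2 / 4 * 4" using False by (intro mult_left_mono) auto
  finally show ?thesis by simp
qed

lemma quadratic_recursion_decay:
  fixes a :: "nat \<Rightarrow> real"
  assumes B: "0 \<le> B" and nonneg: "\<And>k. 0 \<le> a k"
    and rec: "\<And>k. (a k)\<^sup>2 \<le> B * (a k - a (Suc k))"
  shows "a m * (real m + 1) \<le> B"
proof (cases "B = 0")
  case True
  then show ?thesis using rec[of m] by simp
next
  case False
  with B have B: "0 < B" by simp
  show ?thesis
  proof (induction m)
    case 0
    have "0 \<le> B * a (Suc 0)" using nonneg B by simp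
    then have "(a 0)\<^sup>2 \<le> B * a 0" using rec[of 0] by (simp add: algebra_simps)
    then have "a 0 \<le> B" using B nonneg[of 0]
      by (cases "a 0 = 0") (auto simp: power2_eq_square)
    then show ?case by simp
  next
    case (Suc m)
    have "B * a (Suc m) \<le> a m * B - (a m)\<^sup>2" using rec[of m] by (simp add: algebra_simps)
    then have "B * a (Suc m) * ((real m + 1) + 1) \<le> (a m * B - (a m)\<^sup>2) * ((real m + 1) + 1)"
      by (rule mult_right_mono) simp
    also have "\<dots> \<le> B\<^sup>2"
      using Suc.IH nonneg[of m] B by (intro quadratic_recursion_step) auto
    finally show ?case using B by (simp add: power2_eq_square mult.assoc add.commute)
  qed
qed

locale worst_case_omp =
  fixes D :: "'a::real_inner set" and \<phi> :: "nat \<Rightarrow> 'a" and n :: nat and \<kappa> :: real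
    and v \<omega> :: "nat \<Rightarrow> 'a" and W :: "nat \<Rightarrow> 'a set"
  assumes dictionary_norm: "\<And>w. w \<in> D \<Longrightarrow> norm w = 1"
    and orthonormal: "\<forall>i\<in>{1..n}. \<forall>j\<in>{1..n}. inner (\<phi> i) (\<phi> j) = (if i = j then 1 else 0)"
    and kappa_pos: "0 < \<kappa>"
    and W_def: "\<forall>k. W k = span (\<omega> ` {1..k})"
    and v_max: "\<forall>k\<ge>1. v k \<in> span (\<phi> ` {1..n}) \<and> norm (v k) = 1 \<and>
        (\<forall>u\<in>span (\<phi> ` {1..n}). norm u = 1 \<longrightarrow>
           norm (u - proj (W (k - 1)) u) \<le> norm (v k - proj (W (k - 1)) (v k)))"
    and \<omega>_choice: "\<forall>k\<ge>1. \<omega> k \<in> D \<and>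
        \<bar>inner (v k - proj (W (k - 1)) (v k)) (\<omega> k)\<bar> \<ge>
          \<kappa> * (SUP w\<in>D. \<bar>inner (v k - proj (W (k - 1)) (v k)) w\<bar>)"
begin

definition residual :: "nat \<Rightarrow> real" where
  "residual j = (\<Sum>i=1..n. (norm (\<phi> i - proj (W j) (\<phi> i)))\<^sup>2)"

definition greedy_residual :: "nat \<Rightarrow> 'a" where
  "greedy_residual j = v (Suc j) - proj (W j) (v (Suc j))"

definition new_direction :: "nat \<Rightarrow> 'a" where
  "new_direction j = \<omega> (Suc j) - proj (W j) (\<omega> (Suc j))"

lemma residual_nonneg: "0 \<le> residual j"
  by (simp add: residual_def sum_nonneg)

lemma greedy_choice:
  shows "v (Suc j) \<in> span (\<phi> ` {1..n})" and "norm (v (Suc j)) = 1"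
    and "\<And>u. u \<in> span (\<phi> ` {1..n}) \<Longrightarrow> norm u = 1 \<Longrightarrow>
           norm (u - proj (W j) u) \<le> norm (greedy_residual j)"
    and "\<omega> (Suc j) \<in> D"
    and "\<kappa> * (SUP w\<in>D. \<bar>inner (greedy_residual j) w\<bar>) \<le> \<bar>inner (greedy_residual j) (\<omega> (Suc j))\<bar>"
  using v_max[rule_format, of "Suc j"] \<omega>_choice[rule_format, of "Suc j"]
  by (auto simp: greedy_residual_def)

lemma proj_W: "proj (W j) x \<in> W j" "\<And>w. w \<in> W j \<Longrightarrow> inner (x - proj (W j) x) w = 0"
  using proj_span[of "\<omega> ` {1..j}"] W_def by auto

lemma W_mono: "W j \<subseteq> W (Suc j)"
  using W_def by (simp add: span_mono image_mono)

lemma new_direction_in_W: "new_direction j \<in> W (Suc j)"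
proof -
  have "\<omega> (Suc j) \<in> W (Suc j)" using W_def by (simp add: span_base)
  moreover have "proj (W j) (\<omega> (Suc j)) \<in> W (Suc j)" using proj_W(1) W_mono by blast
  ultimately show ?thesis using W_def by (simp add: new_direction_def span_diff)
qed

lemma new_direction_orthogonal: "w \<in> W j \<Longrightarrow> inner (new_direction j) w = 0"
  by (simp add: new_direction_def proj_W(2))

lemma norm_new_direction_le: "norm (new_direction j) \<le> 1"
proof -
  have "(norm (new_direction j))\<^sup>2 \<le> (norm (\<omega> (Suc j) - 0))\<^sup>2"
    using proj_span_minimal[of "\<omega> ` {1..j}" 0] W_def by (simp add: new_direction_def span_zero)
  then show ?thesis using dictionary_norm[OF greedy_choice(4)] by (simp add: power_le_one_iff)
qed

lemma residual_Suc_le: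
  "residual (Suc j) \<le> residual j - (\<Sum>i=1..n. (inner (\<phi> i) (new_direction j))\<^sup>2)"
proof -
  have "(norm (x - proj (W (Suc j)) x))\<^sup>2 \<le> (norm (x - proj (W j) x))\<^sup>2 - (inner x (new_direction j))\<^sup>2" for x
    using proj_span_residual_decrease[of "\<omega> ` {1..j}" "\<omega> ` {1..Suc j}" "new_direction j" x]
      W_def W_mono new_direction_in_W new_direction_orthogonal norm_new_direction_le by simp
  then show ?thesis
    unfolding residual_def sum_subtractf[symmetric] by (rule sum_mono)
qed

lemma inner_v_new_direction:
  "inner (v (Suc j)) (new_direction j) = inner (greedy_residual j) (\<omega> (Suc j))"
proof -
  have "inner (v (Suc j)) (new_direction j) = inner (greedy_residual j) (new_direction j)"
    using new_direction_orthogonal[OF proj_W(1), of j "v (Suc j)"]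
    by (simp add: greedy_residual_def inner_diff_left inner_commute[of "proj (W j) (v (Suc j))"])
  also have "\<dots> = inner (greedy_residual j) (\<omega> (Suc j))"
    using proj_W by (simp add: greedy_residual_def new_direction_def inner_diff_right)
  finally show ?thesis .
qed

lemma residual_le_greedy_residual: "residual j \<le> real n * (norm (greedy_residual j))\<^sup>2"
proof -
  have "residual j \<le> (\<Sum>i=1..n. (norm (greedy_residual j))\<^sup>2)"
    unfolding residual_def
  proof (rule sum_mono)
    fix i assume i: "i \<in> {1..n}"
    then have "\<phi> i \<in> span (\<phi> ` {1..n})" "norm (\<phi> i) = 1"
      using orthonormal by (auto simp: span_base norm_eq_sqrt_inner)
    then show "(norm (\<phi> i - proj (W j) (\<phi> i)))\<^sup>2 \<le> (norm (greedy_residual j))\<^sup>2"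
      using greedy_choice(3) by (simp add: power_mono)
  qed
  then show ?thesis by simp
qed

lemma norm_greedy_residual_sq_le:
  assumes repr: "\<And>i. i \<in> {1..n} \<Longrightarrow> ((\<lambda>w. c w i *\<^sub>R w) has_sum \<phi> i) D"
    and coeff: "((\<lambda>w. L2_set (c w) {1..n}) has_sum S) D"
  shows "(norm (greedy_residual j))\<^sup>2 \<le> (SUP w\<in>D. \<bar>inner (greedy_residual j) w\<bar>) * S"
proof -
  let ?r = "greedy_residual j" and ?v = "v (Suc j)"
  have "\<bar>inner ?r w\<bar> \<le> norm ?r" if "w \<in> D" for w
    using Cauchy_Schwarz_ineq2[of ?r w] dictionary_norm[OF that] by simp
  then have bdd: "bdd_above ((\<lambda>w. \<bar>inner ?r w\<bar>) ` D)" by (rule bdd_aboveI2)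
  have "inner ?r (proj (W j) ?v) = 0"
    unfolding greedy_residual_def by (rule proj_W(2)[OF proj_W(1)])
  moreover have "(norm ?r)\<^sup>2 = inner ?r (?v - proj (W j) ?v)"
    by (simp add: power2_norm_eq_inner greedy_residual_def)
  ultimately have "(norm ?r)\<^sup>2 = inner ?r ?v" by (simp add: inner_diff_right)
  also have "\<dots> = (\<Sum>i=1..n. inner ?v (\<phi> i) * inner ?r (\<phi> i))"
    using orthonormal_span_inner[OF orthonormal _ greedy_choice(1), where x = ?r]
    by (simp add: inner_commute)
  also have "\<dots> \<le> (SUP w\<in>D. \<bar>inner ?r w\<bar>) * L2_set (\<lambda>i. inner ?v (\<phi> i)) {1..n} * S"
    by (rule sum_inner_le_dictionary_bound[OF _ repr coeff]) (use bdd in \<open>auto intro: cSUP_upper\<close>)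
  also have "L2_set (\<lambda>i. inner ?v (\<phi> i)) {1..n} = 1"
    using orthonormal_span_norm[OF orthonormal _ greedy_choice(1)] greedy_choice(2) by simp
  finally show ?thesis by simp
qed

lemma residual_step:
  assumes repr: "\<And>i. i \<in> {1..n} \<Longrightarrow> ((\<lambda>w. c w i *\<^sub>R w) has_sum \<phi> i) D"
    and coeff: "((\<lambda>w. L2_set (c w) {1..n}) has_sum S) D"
  shows "\<kappa>\<^sup>2 * (residual j)\<^sup>2 \<le> (real n * S)\<^sup>2 * (residual j - residual (Suc j))"
proof -
  let ?r = "greedy_residual j" and ?g = "new_direction j"
  have S: "0 \<le> S" using coeff by (rule has_sum_nonneg) simp
  have "\<kappa> * residual j \<le> real n * (\<kappa> * (norm ?r)\<^sup>2)"
    using residual_le_greedy_residual kappa_pos by (simp add: mult.left_commute)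
  also have "\<dots> \<le> real n * (\<kappa> * (SUP w\<in>D. \<bar>inner ?r w\<bar>) * S)"
    using norm_greedy_residual_sq_le[OF repr coeff] kappa_pos
    by (simp add: mult.assoc mult_left_mono)
  also have "\<dots> = real n * S * (\<kappa> * (SUP w\<in>D. \<bar>inner ?r w\<bar>))" by (simp add: algebra_simps)
  also have "\<dots> \<le> real n * S * \<bar>inner ?r (\<omega> (Suc j))\<bar>"
    using greedy_choice(5) S by (intro mult_left_mono) auto
  also have "\<dots> = real n * S * \<bar>inner (v (Suc j)) ?g\<bar>" by (simp add: inner_v_new_direction)
  also have "\<dots> \<le> real n * S * L2_set (\<lambda>i. inner (\<phi> i) ?g) {1..n}"
    using orthonormal_span_inner_le[OF orthonormal _ greedy_choice(1,2), where x = ?g] S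
    by (intro mult_left_mono) auto
  finally have "(\<kappa> * residual j)\<^sup>2 \<le> (real n * S * L2_set (\<lambda>i. inner (\<phi> i) ?g) {1..n})\<^sup>2"
    using kappa_pos residual_nonneg by (intro power_mono) auto
  also have "\<dots> = (real n * S)\<^sup>2 * (\<Sum>i=1..n. (inner (\<phi> i) ?g)\<^sup>2)"
    by (simp add: power_mult_distrib L2_set_def sum_nonneg)
  also have "\<dots> \<le> (real n * S)\<^sup>2 * (residual j - residual (Suc j))"
    using residual_Suc_le[of j] by (intro mult_left_mono) simp_all
  finally show ?thesis by (simp add: power_mult_distrib)
qed

lemma residual_bound_repr:
  assumes repr: "\<And>i. i \<in> {1..n} \<Longrightarrow> ((\<lambda>w. c w i *\<^sub>R w) has_sum \<phi> i) D"
    and coeff: "((\<lambda>w. L2_set (c w) {1..n}) has_sum S) D"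
  shows "residual m * (real m + 1) * \<kappa>\<^sup>2 \<le> (real n * S)\<^sup>2"
proof -
  have "(residual k)\<^sup>2 \<le> (real n * S)\<^sup>2 / \<kappa>\<^sup>2 * (residual k - residual (Suc k))" for k
    using residual_step[OF repr coeff, of k] kappa_pos by (simp add: field_simps)
  then have "residual m * (real m + 1) \<le> (real n * S)\<^sup>2 / \<kappa>\<^sup>2"
    using kappa_pos by (intro quadratic_recursion_decay residual_nonneg) simp_all
  then show ?thesis using kappa_pos by (simp add: pos_le_divide_eq)
qed

lemma residual_bound:
  assumes J: "l1_dict_norm D n \<phi> < \<infinity>"
  shows "residual m * (real m + 1) * \<kappa>\<^sup>2 \<le> (real n * enn2real (l1_dict_norm D n \<phi>))\<^sup>2"
proof (cases "n = 0")
  case True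
  then show ?thesis unfolding residual_def by simp
next
  case n: False
  define x where "x = sqrt (residual m * (real m + 1) * \<kappa>\<^sup>2) / real n"
  have "ennreal x \<le> l1_dict_norm D n \<phi>"
    unfolding l1_dict_norm_def
  proof (rule Inf_greatest, clarify)
    fix c assume repr: "\<forall>i\<in>{1..n}. ((\<lambda>w. c w i *\<^sub>R w) has_sum \<phi> i) D"
    define T where "T = (\<Sum>\<^sub>\<infinity>w\<in>D. ennreal (L2_set (c w) {1..n}))"
    show "ennreal x \<le> (\<Sum>\<^sub>\<infinity>w\<in>D. ennreal (sqrt (\<Sum>i=1..n. (c w i)\<^sup>2)))"
    proof (cases "T = \<infinity>")
      case True
      then show ?thesis by (simp add: T_def L2_set_def)
    next
      case False
      then have "((\<lambda>w. L2_set (c w) {1..n}) has_sum enn2real T) D"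
        unfolding T_def by (intro has_sum_enn2real_infsum) (auto simp: top.not_eq_extremum)
      with repr have "residual m * (real m + 1) * \<kappa>\<^sup>2 \<le> (real n * enn2real T)\<^sup>2"
        by (intro residual_bound_repr) auto
      then have "sqrt (residual m * (real m + 1) * \<kappa>\<^sup>2) \<le> real n * enn2real T"
        using real_sqrt_le_mono by fastforce
      then have "x \<le> enn2real T"
        using n by (simp add: x_def divide_le_eq mult.commute)
      then have "ennreal x \<le> ennreal (enn2real T)" by (rule ennreal_leI)
      then show ?thesis using False by (simp add: T_def L2_set_def ennreal_enn2real_if)
    qed
  qed
  moreover have "0 \<le> x" using residual_nonneg by (simp add: x_def)
  ultimately have "x \<le> enn2real (l1_dict_norm D n \<phi>)"
    using enn2real_mono J by fastforce
  then have "sqrt (residual m * (real m + 1) * \<kappa>\<^sup>2) \<le> real n * enn2real (l1_dict_norm D n \<phi>)"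
    using n by (simp add: x_def divide_le_eq mult.commute)
  then show ?thesis by (rule sqrt_le_D)
qed

end

theorem theorem3:
  fixes D :: "'a::{real_inner, complete_space} set"
    and \<phi> :: "nat \<Rightarrow> 'a" and n :: nat and \<kappa> :: real
    and v \<omega> :: "nat \<Rightarrow> 'a" and W :: "nat \<Rightarrow> 'a set" and Vn :: "'a set"
  assumes dict: "dictionary D"
    and Vn_def: "Vn = span (\<phi> ` {1..n})"
    and orthonormal: "\<forall>i\<in>{1..n}. \<forall>j\<in>{1..n}. inner (\<phi> i) (\<phi> j) = (if i = j then 1 else 0)"
    and kappa: "0 < \<kappa>" "\<kappa> < 1"
    and W_def: "\<forall>k. W k = span (\<omega> ` {1..k})"
    and v_max: "\<forall>k\<ge>1. v k \<in> Vn \<and> norm (v k) = 1 \<and>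
        (\<forall>u\<in>Vn. norm u = 1 \<longrightarrow> norm (u - proj (W (k - 1)) u) \<le> norm (v k - proj (W (k - 1)) (v k)))"
    and \<omega>_choice: "\<forall>k\<ge>1. \<omega> k \<in> D \<and>
        \<bar>inner (v k - proj (W (k - 1)) (v k)) (\<omega> k)\<bar> \<ge>
          \<kappa> * (SUP w\<in>D. \<bar>inner (v k - proj (W (k - 1)) (v k)) w\<bar>)"
    and J_fin: "l1_dict_norm D n \<phi> < \<infinity>"
  shows "\<forall>m. (\<Sum>i=1..n. (norm (\<phi> i - proj (W m) (\<phi> i)))\<^sup>2)
           \<le> (real n)\<^sup>2 * (enn2real (l1_dict_norm D n \<phi>))\<^sup>2 / \<kappa>\<^sup>2 * inverse (real m + 1)"
proof
  fix m
  interpret worst_case_omp D \<phi> n \<kappa> v \<omega> W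
    using dict orthonormal kappa(1) W_def v_max \<omega>_choice
    unfolding Vn_def dictionary_def by unfold_locales auto
  have "residual m * (real m + 1) * \<kappa>\<^sup>2 \<le> (real n * enn2real (l1_dict_norm D n \<phi>))\<^sup>2"
    using J_fin by (rule residual_bound)
  moreover have "0 < (real m + 1) * \<kappa>\<^sup>2" using kappa(1) by simp
  ultimately have "residual m \<le> (real n * enn2real (l1_dict_norm D n \<phi>))\<^sup>2 / ((real m + 1) * \<kappa>\<^sup>2)"
    by (simp add: pos_le_divide_eq mult.assoc)
  then show "(\<Sum>i=1..n. (norm (\<phi> i - proj (W m) (\<phi> i)))\<^sup>2)
      \<le> (real n)\<^sup>2 * (enn2real (l1_dict_norm D n \<phi>))\<^sup>2 / \<kappa>\<^sup>2 * inverse (real m + 1)"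
    by (simp add: residual_def power_mult_distrib divide_inverse mult.commute mult.left_commute)
qed

end
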